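(* Let $G$ be a connected graph with $n\geq 3$ vertices. If $G$ has $k>0$ basis forced vertices, then $|E(G)|\leq \frac{n(n-1)}{2}-2k$.
   Context: All graphs are finite and simple. For vertices $u,v$ of a connected graph $G$, $d(u,v)$ is the length of a shortest $u$–$v$ path. A set $R\subseteq V(G)$ is a resolving set if for all distinct $x,y\in V(G)$ there is $r\in R$ with $d(r,x)\neq d(r,y)$. The metric dimension $\dim(G)$ is the minimum cardinality of a resolving set, and a resolving set of cardinality $\dim(G)$ is a metric basis. A vertex is a basis forced vertex if it belongs to every metric basis of $G$. *)

theory Defs
  imports Main
begin

definition simple_graph :: "'a set \<Rightarrow> 'a set set \<Rightarrow> bool" where
  "simple_graph V E \<longleftrightarrow> finite V \<and> (\<forall>e\<in>E. e \<subseteq> V \<and> card e = 2)"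

fun is_walk :: "'a set \<Rightarrow> 'a set set \<Rightarrow> 'a list \<Rightarrow> bool" where
  "is_walk V E [] = False"
| "is_walk V E [v] = (v \<in> V)"
| "is_walk V E (u # v # xs) = ({u, v} \<in> E \<and> u \<in> V \<and> is_walk V E (v # xs))"

text \<open>There is a u-v walk with exactly k edges.\<close>
definition walk_len :: "'a set \<Rightarrow> 'a set set \<Rightarrow> 'a \<Rightarrow> 'a \<Rightarrow> nat \<Rightarrow> bool" where
  "walk_len V E u v k \<longleftrightarrow> (\<exists>p. is_walk V E p \<and> hd p = u \<and> last p = v \<and> length p = Suc k)"

definition connected_graph :: "'a set \<Rightarrow> 'a set set \<Rightarrow> bool" where
  "connected_graph V E \<longleftrightarrow> V \<noteq> {} \<and> (\<forall>u\<in>V. \<forall>v\<in>V. \<exists>k. walk_len V E u v k)"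

definition gdist :: "'a set \<Rightarrow> 'a set set \<Rightarrow> 'a \<Rightarrow> 'a \<Rightarrow> nat" where
  "gdist V E u v = (LEAST k. walk_len V E u v k)"

definition resolving_set :: "'a set \<Rightarrow> 'a set set \<Rightarrow> 'a set \<Rightarrow> bool" where
  "resolving_set V E R \<longleftrightarrow> R \<subseteq> V \<and>
     (\<forall>x\<in>V. \<forall>y\<in>V. x \<noteq> y \<longrightarrow> (\<exists>r\<in>R. gdist V E r x \<noteq> gdist V E r y))"

definition metric_dim :: "'a set \<Rightarrow> 'a set set \<Rightarrow> nat" where
  "metric_dim V E = (LEAST k. \<exists>R. resolving_set V E R \<and> card R = k)"

definition metric_basis :: "'a set \<Rightarrow> 'a set set \<Rightarrow> 'a set \<Rightarrow> bool" where
  "metric_basis V E R \<longleftrightarrow> resolving_set V E R \<and> card R = metric_dim V E"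

definition basis_forced :: "'a set \<Rightarrow> 'a set set \<Rightarrow> 'a \<Rightarrow> bool" where
  "basis_forced V E v \<longleftrightarrow> v \<in> V \<and> (\<forall>R. metric_basis V E R \<longrightarrow> v \<in> R)"

definition forced_vertices :: "'a set \<Rightarrow> 'a set set \<Rightarrow> 'a set" where
  "forced_vertices V E = {v. basis_forced V E v}"

end

theory Submission
  imports Defs
begin

(* Fix a metric basis R containing a basis forced vertex v and call two distinct vertices
   unresolved if no vertex of R - {v} distinguishes them. By minimality of R there is an
   unresolved pair, and since v is forced, every u outside R fails to distinguish some
   unresolved pair (else R - {v} + u would be a metric basis avoiding v). Unresolved pairs lie
   in {v} + (V - R) and are distinguished by v itself, so no two neighbours of v form one; in
   particular every vertex is unresolved with at most one neighbour of v. If v had at most one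
   non-neighbour w outside R, applying the exchange property to w, to the neighbour a
   unresolved with v, and to the neighbour b unresolved with w forces contradictory adjacencies
   between a, b and w. Hence every forced vertex v has two non-neighbours u outside R, and the
   resulting 2k pairs {v, u} are distinct non-edges. *)

lemma walk_len_0_iff: "walk_len V E u v 0 \<longleftrightarrow> u = v \<and> u \<in> V"
proof
  assume "walk_len V E u v 0"
  then obtain p where "is_walk V E p" "hd p = u" "last p = v" "length p = 1"
    unfolding walk_len_def by auto
  then show "u = v \<and> u \<in> V" by (cases p) auto
next
  assume "u = v \<and> u \<in> V"
  then show "walk_len V E u v 0" unfolding walk_len_def by (intro exI[of _ "[u]"]) auto
qed

lemma walk_len_1_iff: "walk_len V E u v 1 \<longleftrightarrow> {u, v} \<in> E \<and> u \<in> V \<and> v \<in> V"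
proof
  assume "walk_len V E u v 1"
  then obtain p where "is_walk V E p" "hd p = u" "last p = v" "length p = 2"
    unfolding walk_len_def by auto
  then show "{u, v} \<in> E \<and> u \<in> V \<and> v \<in> V"
    by (cases p; cases "tl p") (auto simp: numeral_2_eq_2)
next
  assume "{u, v} \<in> E \<and> u \<in> V \<and> v \<in> V"
  then show "walk_len V E u v 1" unfolding walk_len_def by (intro exI[of _ "[u, v]"]) auto
qed

lemma walk_len_gdist:
  assumes "connected_graph V E" "u \<in> V" "v \<in> V"
  shows "walk_len V E u v (gdist V E u v)"
  using assms unfolding connected_graph_def gdist_def by (metis LeastI_ex)

lemma gdist_eq_0_iff:
  assumes "connected_graph V E" "u \<in> V" "v \<in> V"
  shows "gdist V E u v = 0 \<longleftrightarrow> u = v"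
proof
  assume "gdist V E u v = 0"
  then show "u = v" using walk_len_gdist[OF assms] walk_len_0_iff by metis
next
  assume "u = v"
  then have "walk_len V E u v 0" using walk_len_0_iff assms by metis
  then show "gdist V E u v = 0" unfolding gdist_def by (metis Least_le le_zero_eq)
qed

lemma gdist_eq_1_iff:
  assumes "connected_graph V E" "u \<in> V" "v \<in> V"
  shows "gdist V E u v = 1 \<longleftrightarrow> u \<noteq> v \<and> {u, v} \<in> E"
proof
  assume "gdist V E u v = 1"
  then show "u \<noteq> v \<and> {u, v} \<in> E"
    using gdist_eq_0_iff[OF assms] walk_len_gdist[OF assms] walk_len_1_iff by fastforce
next
  assume uv: "u \<noteq> v \<and> {u, v} \<in> E"
  then have "walk_len V E u v 1" using walk_len_1_iff assms by metis
  then have "gdist V E u v \<le> 1" unfolding gdist_def by (metis Least_le)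
  moreover have "gdist V E u v \<noteq> 0" using gdist_eq_0_iff[OF assms] uv by auto
  ultimately show "gdist V E u v = 1" by auto
qed

definition unresolved_pair :: "'a set \<Rightarrow> 'a set set \<Rightarrow> 'a set \<Rightarrow> 'a \<Rightarrow> 'a \<Rightarrow> bool" where
  "unresolved_pair V E S x y \<longleftrightarrow>
     x \<in> V \<and> y \<in> V \<and> x \<noteq> y \<and> (\<forall>r\<in>S. gdist V E r x = gdist V E r y)"

lemma resolving_set_iff_no_unresolved_pair:
  "resolving_set V E S \<longleftrightarrow> S \<subseteq> V \<and> \<not> (\<exists>x y. unresolved_pair V E S x y)"
  unfolding resolving_set_def unresolved_pair_def by blast

lemma unresolved_pair_sym: "unresolved_pair V E S x y \<Longrightarrow> unresolved_pair V E S y x"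
  unfolding unresolved_pair_def by auto

lemma unresolved_pair_trans:
  "unresolved_pair V E S x y \<Longrightarrow> unresolved_pair V E S y z \<Longrightarrow> x \<noteq> z \<Longrightarrow>
   unresolved_pair V E S x z"
  unfolding unresolved_pair_def by auto

lemma unresolved_pair_insert_iff:
  "unresolved_pair V E (insert u S) x y \<longleftrightarrow>
     unresolved_pair V E S x y \<and> gdist V E u x = gdist V E u y"
  unfolding unresolved_pair_def by auto

lemma unresolved_pair_non_separator_distinct:
  assumes "connected_graph V E" "unresolved_pair V E S x y" "u \<in> V"
    and "gdist V E u x = gdist V E u y"
  shows "u \<noteq> x" "u \<noteq> y"
  using assms gdist_eq_0_iff[OF assms(1)] unfolding unresolved_pair_def by metis+

lemma unresolved_pair_outside_set:
  assumes "connected_graph V E" "unresolved_pair V E S x y" "S \<subseteq> V"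
  shows "x \<notin> S" "y \<notin> S"
  using unresolved_pair_non_separator_distinct[OF assms(1,2)] assms(2,3)
  unfolding unresolved_pair_def by blast+

lemma resolving_set_vertex_set:
  assumes "connected_graph V E"
  shows "resolving_set V E V"
  unfolding resolving_set_def using gdist_eq_0_iff[OF assms] by (metis order_refl)

lemma metric_basis_exists:
  assumes "connected_graph V E"
  obtains R where "metric_basis V E R"
  unfolding metric_basis_def metric_dim_def
  using LeastI_ex[of "\<lambda>k. \<exists>R. resolving_set V E R \<and> card R = k"]
    resolving_set_vertex_set[OF assms] by blast

lemma metric_dim_le_card: "resolving_set V E T \<Longrightarrow> metric_dim V E \<le> card T"
  unfolding metric_dim_def by (rule Least_le) blast

lemma metric_basis_remove_unresolved:
  assumes "metric_basis V E R" "finite R" "v \<in> R"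
  obtains x y where "unresolved_pair V E (R - {v}) x y"
proof -
  have "card (R - {v}) < metric_dim V E"
    using assms card_Diff1_less unfolding metric_basis_def by metis
  then have "\<not> resolving_set V E (R - {v})" using metric_dim_le_card by fastforce
  then show ?thesis
    using that assms(1) unfolding resolving_set_iff_no_unresolved_pair metric_basis_def by blast
qed

lemma metric_basis_exchange_unresolved:
  assumes "metric_basis V E R" "finite R" "basis_forced V E v" "u \<in> V - R"
  obtains x y where "unresolved_pair V E (R - {v}) x y" "gdist V E u x = gdist V E u y"
proof -
  have "v \<in> R" using assms(1,3) unfolding basis_forced_def by blast
  then have "card (insert u (R - {v})) = card R"
    using assms(2,4) by (simp add: card_Diff1_less) (metis Suc_pred card_gt_0_iff empty_iff)
  moreover have "v \<notin> insert u (R - {v})" using assms(4) \<open>v \<in> R\<close> by auto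
  ultimately have "\<not> resolving_set V E (insert u (R - {v}))"
    using assms(1,3) unfolding basis_forced_def metric_basis_def by auto
  moreover have "insert u (R - {v}) \<subseteq> V"
    using assms(1,4) unfolding metric_basis_def resolving_set_def by blast
  ultimately obtain x y where "unresolved_pair V E (insert u (R - {v})) x y"
    unfolding resolving_set_iff_no_unresolved_pair by blast
  then show ?thesis using that unfolding unresolved_pair_insert_iff by blast
qed

lemma unresolved_pair_separated:
  assumes "resolving_set V E R" "unresolved_pair V E (R - {v}) x y"
  shows "gdist V E v x \<noteq> gdist V E v y"
  using assms unfolding resolving_set_def unresolved_pair_def by blast

locale forced_basis_vertex =
  fixes V :: "'a set" and E :: "'a set set" and R :: "'a set" and v :: 'a
  assumes connected: "connected_graph V E" and finite_vertices: "finite V"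
    and basis: "metric_basis V E R" and forced: "basis_forced V E v"
begin

abbreviation unresolved :: "'a \<Rightarrow> 'a \<Rightarrow> bool" where
  "unresolved \<equiv> unresolved_pair V E (R - {v})"

definition neighbour :: "'a \<Rightarrow> bool" where
  "neighbour u \<longleftrightarrow> u \<in> V - R \<and> {v, u} \<in> E"

lemma resolving: "resolving_set V E R"
  using basis unfolding metric_basis_def by blast

lemma basis_subset: "R \<subseteq> V"
  using resolving unfolding resolving_set_def by blast

lemma finite_basis: "finite R"
  using basis_subset finite_vertices finite_subset by blast

lemma forced_in_basis: "v \<in> R"
  using basis forced unfolding basis_forced_def by blast

lemma forced_vertex: "v \<in> V"
  using forced_in_basis basis_subset by blast

lemmas gdist_eq_1 = gdist_eq_1_iff[OF connected]

lemma gdist_neighbour: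
  assumes "neighbour u"
  shows "gdist V E v u = 1" "gdist V E u v = 1"
  using assms gdist_eq_1 forced_in_basis basis_subset
  unfolding neighbour_def by (auto simp: insert_commute)

lemma unresolved_pair_location: "unresolved x y \<Longrightarrow> x = v \<or> x \<in> V - R"
  using unresolved_pair_outside_set(1)[OF connected] basis_subset
  unfolding unresolved_pair_def by blast

lemma neighbours_resolved: "neighbour x \<Longrightarrow> neighbour y \<Longrightarrow> \<not> unresolved x y"
  using unresolved_pair_separated[OF resolving] gdist_neighbour by metis

lemma unresolved_neighbour_unique:
  assumes "unresolved z c" "unresolved z c'" "neighbour c" "neighbour c'"
  shows "c = c'"
proof (rule ccontr)
  assume "c \<noteq> c'"
  then have "unresolved c c'"
    using unresolved_pair_trans[OF unresolved_pair_sym[OF assms(1)] assms(2)] by blast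
  then show False using neighbours_resolved assms(3,4) by blast
qed

lemma unresolved_cases:
  assumes "unresolved x y"
  obtains "x = v" "y \<in> V - R" | "y = v" "x \<in> V - R"
    | "x \<in> V - R" "y \<in> V - R" "\<not> neighbour x" | "x \<in> V - R" "y \<in> V - R" "\<not> neighbour y"
proof -
  have "x \<noteq> y" using assms unfolding unresolved_pair_def by blast
  moreover have "x = v \<or> x \<in> V - R" "y = v \<or> y \<in> V - R"
    using unresolved_pair_location assms unresolved_pair_sym[OF assms] by blast+
  moreover have "\<not> (neighbour x \<and> neighbour y)" using neighbours_resolved assms by blast
  ultimately show ?thesis using that by blast
qed

lemma unresolved_symmetric_cases:
  assumes "unresolved x y" "P x y" and sym: "\<And>x y. P x y \<Longrightarrow> P y x"
  obtains c where "c \<in> V - R" "unresolved v c" "P v c"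
    | c c' where "c \<in> V - R" "\<not> neighbour c" "c' \<in> V - R" "unresolved c c'" "P c c'"
  using assms(1)
proof (cases rule: unresolved_cases)
  case 1
  then show ?thesis using that(1)[of y] assms(1,2) by simp
next
  case 2
  then show ?thesis using that(1)[of x] unresolved_pair_sym[OF assms(1)] sym[OF assms(2)] by simp
next
  case 3
  show ?thesis by (rule that(2)[OF 3(1,3,2) assms(1,2)])
next
  case 4
  show ?thesis by (rule that(2)[OF 4(2,3,1) unresolved_pair_sym[OF assms(1)] sym[OF assms(2)]])
qed

lemma unresolved_exists:
  obtains c where "c \<in> V - R" "unresolved v c"
    | c c' where "c \<in> V - R" "\<not> neighbour c" "c' \<in> V - R" "unresolved c c'"
proof -
  obtain x y where "unresolved x y"
    using metric_basis_remove_unresolved[OF basis finite_basis forced_in_basis] by blast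
  then show ?thesis
    using unresolved_symmetric_cases[where P = "\<lambda>_ _. True"] that by blast
qed

lemma unresolved_exchange:
  assumes "u \<in> V - R"
  obtains c where "c \<in> V - R" "u \<noteq> c" "unresolved v c" "gdist V E u v = gdist V E u c"
    | c c' where "c \<in> V - R" "\<not> neighbour c" "c' \<in> V - R" "u \<noteq> c" "u \<noteq> c'"
        "unresolved c c'" "gdist V E u c = gdist V E u c'"
proof -
  obtain x y where xy: "unresolved x y" "gdist V E u x = gdist V E u y \<and> u \<noteq> x \<and> u \<noteq> y"
    using metric_basis_exchange_unresolved[OF basis finite_basis forced assms]
      unresolved_pair_non_separator_distinct[OF connected] assms by (metis DiffD1)
  show ?thesis
    by (rule unresolved_symmetric_cases[
          where P = "\<lambda>x y. gdist V E u x = gdist V E u y \<and> u \<noteq> x \<and> u \<noteq> y", OF xy])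
      (use that in auto)
qed

lemma non_neighbour_or_unresolved_neighbour_of_v:
  obtains u where "u \<in> V - R" "u \<noteq> w" "{v, u} \<notin> E"
    | a where "neighbour a" "unresolved v a" "w \<in> V - R \<and> \<not> neighbour w \<longrightarrow> {a, w} \<notin> E"
proof (cases "\<exists>u\<in>V - R. u \<noteq> w \<and> {v, u} \<notin> E")
  case True
  with that(1) show ?thesis by blast
next
  case False
  then have adjacent: "\<And>u. u \<in> V - R \<Longrightarrow> u \<noteq> w \<Longrightarrow> neighbour u"
    unfolding neighbour_def by blast
  show ?thesis
  proof (cases "w \<in> V - R \<and> \<not> neighbour w")
    case True
    then have w: "w \<in> V - R" "gdist V E w v \<noteq> 1"
      using gdist_eq_1 forced_vertex unfolding neighbour_def by (auto simp: insert_commute)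
    from w(1) show ?thesis
    proof (cases rule: unresolved_exchange)
      case (1 c)
      then have "{w, c} \<notin> E" using w gdist_eq_1 by auto
      then show ?thesis using that(2) 1 adjacent by (auto simp: insert_commute)
    next
      case (2 c c')
      then show ?thesis using adjacent by blast
    qed
  next
    case False
    show ?thesis
    proof (cases rule: unresolved_exists)
      case (1 c)
      then show ?thesis using that(2) False adjacent by blast
    next
      case (2 c c')
      then show ?thesis using False adjacent by blast
    qed
  qed
qed

lemma non_neighbour_or_unresolved_neighbour_of_w:
  assumes a: "neighbour a" "unresolved v a" "w \<in> V - R \<and> \<not> neighbour w \<longrightarrow> {a, w} \<notin> E"
  obtains u where "u \<in> V - R" "u \<noteq> w" "{v, u} \<notin> E"
    | b where "neighbour b" "a \<noteq> b" "unresolved w b" "{a, b} \<notin> E"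
proof (cases "\<exists>u\<in>V - R. u \<noteq> w \<and> {v, u} \<notin> E")
  case True
  with that(1) show ?thesis by blast
next
  case False
  then have adjacent: "\<And>u. u \<in> V - R \<Longrightarrow> u \<noteq> w \<Longrightarrow> neighbour u"
    unfolding neighbour_def by blast
  have a_V: "a \<in> V - R" using a(1) unfolding neighbour_def by blast
  then show ?thesis
  proof (cases rule: unresolved_exchange)
    case (1 c)
    show ?thesis
    proof (cases "neighbour c")
      case True
      then show ?thesis using 1 a unresolved_neighbour_unique by blast
    next
      case False
      then have "c = w" using 1 adjacent by blast
      then have "gdist V E a w = 1" using 1 gdist_neighbour(2)[OF a(1)] by simp
      then have "{a, w} \<in> E" using gdist_eq_1 a_V 1(1) \<open>c = w\<close> by blast
      then show ?thesis using a(3) 1(1) False \<open>c = w\<close> by blast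
    qed
  next
    case (2 c c')
    then have "c = w" "c' \<noteq> w" using adjacent unfolding unresolved_pair_def by auto
    then have "{a, w} \<notin> E" using a(3) 2(1,2) by blast
    then have "gdist V E a w \<noteq> 1" using gdist_eq_1 a_V 2(1) \<open>c = w\<close> by blast
    then have "gdist V E a c' \<noteq> 1" using 2 \<open>c = w\<close> by simp
    then have "{a, c'} \<notin> E" using 2 gdist_eq_1 a_V by blast
    moreover have "neighbour c'" using adjacent 2(3) \<open>c' \<noteq> w\<close> by blast
    ultimately show ?thesis using that(2) 2 \<open>c = w\<close> by blast
  qed
qed

lemma non_neighbour_from_unresolved_neighbours:
  assumes a: "neighbour a" "unresolved v a"
    and b: "neighbour b" "a \<noteq> b" "unresolved w b" "{a, b} \<notin> E"
  obtains u where "u \<in> V - R" "u \<noteq> w" "{v, u} \<notin> E"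
proof (cases "\<exists>u\<in>V - R. u \<noteq> w \<and> {v, u} \<notin> E")
  case True
  with that(1) show ?thesis by blast
next
  case False
  then have adjacent: "\<And>u. u \<in> V - R \<Longrightarrow> u \<noteq> w \<Longrightarrow> neighbour u"
    unfolding neighbour_def by blast
  have a_V: "a \<in> V - R" and b_V: "b \<in> V - R" using a(1) b(1) unfolding neighbour_def by auto
  from b_V show ?thesis
  proof (cases rule: unresolved_exchange)
    case (1 c)
    show ?thesis
    proof (cases "neighbour c")
      case True
      then have "c = a" using 1 a unresolved_neighbour_unique by blast
      then have "gdist V E b a = 1" using 1 gdist_neighbour(2)[OF b(1)] by simp
      then show ?thesis using b(4) gdist_eq_1 a_V b_V by (auto simp: insert_commute)
    next
      case False
      then have "c = w" using 1(1) adjacent by blast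
      then have "unresolved v b"
        using unresolved_pair_trans[OF 1(3)] b(3) b_V forced_in_basis by blast
      then show ?thesis using a b unresolved_neighbour_unique by blast
    qed
  next
    case (2 c c')
    then have "c = w" "c' \<noteq> w" using adjacent unfolding unresolved_pair_def by auto
    then show ?thesis using 2 b adjacent unresolved_neighbour_unique by blast
  qed
qed

lemma non_neighbour_outside_basis:
  obtains u where "u \<in> V - R" "u \<noteq> w" "{v, u} \<notin> E"
proof (rule non_neighbour_or_unresolved_neighbour_of_v)
  fix a
  assume a: "neighbour a" "unresolved v a" "w \<in> V - R \<and> \<not> neighbour w \<longrightarrow> {a, w} \<notin> E"
  show thesis
  proof (rule non_neighbour_or_unresolved_neighbour_of_w[OF a])
    fix b
    assume "neighbour b" "a \<noteq> b" "unresolved w b" "{a, b} \<notin> E"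
    from a(1,2) this show thesis by (rule non_neighbour_from_unresolved_neighbours) (rule that)
  qed (rule that)
qed (rule that)

lemma two_le_card_non_neighbours: "2 \<le> card {u \<in> V - R. {v, u} \<notin> E}"
proof -
  obtain u where u: "u \<in> V - R" "{v, u} \<notin> E" using non_neighbour_outside_basis by blast
  obtain u' where u': "u' \<in> V - R" "u' \<noteq> u" "{v, u'} \<notin> E"
    using non_neighbour_outside_basis by blast
  have "card {u, u'} \<le> card {u \<in> V - R. {v, u} \<notin> E}"
    by (rule card_mono) (use finite_vertices u u' in auto)
  then show ?thesis using u'(2) by simp
qed

end

lemma card_doubletons_Sigma:
  assumes "finite F" "F \<subseteq> R" "\<And>v. v \<in> F \<Longrightarrow> finite (N v) \<and> N v \<inter> R = {}"
  shows "card ((\<lambda>(v, u). {v, u}) ` (SIGMA v:F. N v)) = (\<Sum>v\<in>F. card (N v))"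
proof -
  have "inj_on (\<lambda>(v, u). {v, u}) (SIGMA v:F. N v)"
  proof (rule inj_onI, clarify)
    fix v u v' u'
    assume "v \<in> F" "u \<in> N v" "v' \<in> F" "u' \<in> N v'" "{v, u} = {v', u'}"
    moreover from calculation have "v \<in> R" "u \<notin> R" "v' \<in> R" "u' \<notin> R" using assms(2,3) by auto
    ultimately show "v = v' \<and> u = u'" unfolding doubleton_eq_iff by blast
  qed
  then show ?thesis using assms(1,3) by (simp add: card_image)
qed

lemma card_edges_add_card_non_edges_le:
  assumes "simple_graph V E" "P \<subseteq> {B. B \<subseteq> V \<and> card B = 2}" "E \<inter> P = {}"
  shows "card E + card P \<le> card V choose 2"
proof -
  have finite_V: "finite V" using assms(1) unfolding simple_graph_def by blast
  have "E \<union> P \<subseteq> {B. B \<subseteq> V \<and> card B = 2}" using assms(1,2) unfolding simple_graph_def by blast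
  moreover have "finite {B. B \<subseteq> V \<and> card B = 2}" using finite_V by simp
  ultimately have "card (E \<union> P) \<le> card {B. B \<subseteq> V \<and> card B = 2}" by (rule card_mono[rotated])
  then have "card (E \<union> P) \<le> card V choose 2" unfolding n_subsets[OF finite_V] .
  moreover have "card (E \<union> P) = card E + card P"
    using card_Un_disjoint[OF _ _ assms(3)] finite_subset[OF \<open>E \<union> P \<subseteq> _\<close>] finite_V by auto
  ultimately show ?thesis by simp
qed

lemma two_mult_choose_two: "2 * (n choose 2) = n * (n - 1)"
proof -
  have "even (n * (n - 1))" by (cases "even n") auto
  then show ?thesis unfolding choose_two by simp
qed

lemma edges_bound_by_non_neighbours_outside:
  assumes G: "simple_graph V E" and "F \<subseteq> R" "R \<subseteq> V"
    and non_adjacent: "\<And>v. v \<in> F \<Longrightarrow> m \<le> card {u \<in> V - R. {v, u} \<notin> E}"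
  shows "2 * (card E + m * card F) \<le> card V * (card V - 1)"
proof -
  have finite_V: "finite V" using G unfolding simple_graph_def by blast
  define N where "N v = {u \<in> V - R. {v, u} \<notin> E}" for v
  define P where "P = (\<lambda>(v, u). {v, u}) ` (SIGMA v:F. N v)"
  have "card P = (\<Sum>v\<in>F. card (N v))"
    unfolding P_def using assms finite_V
    by (intro card_doubletons_Sigma) (auto simp: N_def finite_subset)
  moreover have "(\<Sum>v\<in>F. m) \<le> (\<Sum>v\<in>F. card (N v))"
    using non_adjacent unfolding N_def by (rule sum_mono)
  ultimately have "m * card F \<le> card P" by (simp add: mult.commute)
  moreover have "card E + card P \<le> card V choose 2"
  proof (rule card_edges_add_card_non_edges_le[OF G])
    show "P \<subseteq> {B. B \<subseteq> V \<and> card B = 2}"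
      using assms(2,3) unfolding P_def N_def by (auto simp: card_insert_if)
    show "E \<inter> P = {}" unfolding P_def N_def by auto
  qed
  ultimately have "card E + m * card F \<le> card V choose 2" by linarith
  then show ?thesis unfolding two_mult_choose_two[symmetric] by simp
qed

theorem theorem9:
  fixes V :: "'a set" and E :: "'a set set" and n k :: nat
  assumes "simple_graph V E"
    and "connected_graph V E"
    and "card V = n" and "n \<ge> 3"
    and "card (forced_vertices V E) = k" and "k > 0"
  shows "2 * card E + 4 * k \<le> n * (n - 1)"
proof -
  have finite_V: "finite V" using assms(1) unfolding simple_graph_def by blast
  obtain R where basis: "metric_basis V E R" using metric_basis_exists[OF assms(2)] .
  have "forced_vertices V E \<subseteq> R"
    using basis unfolding forced_vertices_def basis_forced_def by blast
  moreover have "R \<subseteq> V" using basis unfolding metric_basis_def resolving_set_def by blast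
  moreover have "2 \<le> card {u \<in> V - R. {v, u} \<notin> E}" if "v \<in> forced_vertices V E" for v
  proof -
    interpret forced_basis_vertex V E R v
      using assms(2) finite_V basis that unfolding forced_vertices_def by unfold_locales auto
    show ?thesis by (rule two_le_card_non_neighbours)
  qed
  ultimately have "2 * (card E + 2 * k) \<le> n * (n - 1)"
    using edges_bound_by_non_neighbours_outside[OF assms(1)] assms(3,5) by blast
  then show ?thesis by simp
qed

end
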